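(* For each $n\ge1$, the number of connected spanning subgraphs of $\Sigma_n$ equals $H_n(1,2)=H_{2,n}(1,2)$, where, writing $H_2,N,M$ for $H_{2,n}(1,2),N_n(1,2),M_n(1,2)$, $$H_{2,n+1}(1,2)=4H_2^3+6H_2^2N,\qquad N_{n+1}(1,2)=H_2^3+8H_2^2N+H_2^2M+7H_2N^2,$$ $$M_{n+1}(1,2)=H_2^3+12H_2^2N+3H_2^2M+39H_2N^2+12H_2NM+14N^3,$$ with $H_{2,1}(1,2)=4$, $N_1(1,2)=M_1(1,2)=1$.
   Context: Graphs are finite. For a graph $G$, a spanning subgraph $A$ has vertex set $V(G)$ and edge set $E(A)\subseteq E(G)$; $k(A)$ is its number of components, $r(A)=|V(G)|-k(A)$, $n(A)=|E(A)|-r(A)$; the weight of $A$ is $(x-1)^{r(G)-r(A)}(y-1)^{n(A)}$ and the Tutte polynomial $T(G;x,y)$ is the sum of the weights of all spanning subgraphs. The graphs $\Sigma_n$ ($n\ge1$; Schreier graphs of the Hanoi Towers group $H^{(3)}$ with loops removed) each have three outmost vertices top, left, right: $\Sigma_1$ is the triangle $K_3$; $\Sigma_{n+1}$ is the disjoint union of three copies $G_1,G_2,G_3$ of $\Sigma_n$ together with three new edges joining left$(G_1)$ to top$(G_2)$, right$(G_1)$ to top$(G_3)$, and right$(G_2)$ to left$(G_3)$; its outmost vertices are top$(G_1)$, left$(G_2)$, right$(G_3)$. $H_n=T(\Sigma_n;x,y)$. $H_{2,n}$ (resp. $H_{1,n}$, $H_{0,n}$) is the sum of the weights of the spanning subgraphs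 of $\Sigma_n$ in which the three outmost vertices lie in one component (resp. left and right outmost in one component, top in another; resp. the three in three distinct components). $N_n=H_{1,n}/(x-1)$ and $M_n=H_{0,n}/(x-1)^2$, which are polynomials. *)

theory Defs
  imports Complex_Main
begin

definition adj :: "'a set set \<Rightarrow> ('a \<times> 'a) set" where
  "adj A = {(u, v). {u, v} \<in> A}"

definition ncomp :: "'a set \<Rightarrow> 'a set set \<Rightarrow> nat" where
  "ncomp V A = card (V // {(u, v). u \<in> V \<and> v \<in> V \<and> (u, v) \<in> (adj A)\<^sup>*})"

definition same_comp :: "'a set set \<Rightarrow> 'a \<Rightarrow> 'a \<Rightarrow> bool" where
  "same_comp A u v \<longleftrightarrow> (u, v) \<in> (adj A)\<^sup>*"

definition rk :: "'a set \<Rightarrow> 'a set set \<Rightarrow> nat" where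
  "rk V A = card V - ncomp V A"

definition nullity :: "'a set \<Rightarrow> 'a set set \<Rightarrow> nat" where
  "nullity V A = card A - rk V A"

definition tutte :: "'a set \<Rightarrow> 'a set set \<Rightarrow> real \<Rightarrow> real \<Rightarrow> real" where
  "tutte V E x y = (\<Sum>A\<in>Pow E. (x - 1) ^ (rk V E - rk V A) * (y - 1) ^ nullity V A)"

section \<open>The graphs Sigma_n (vertices are words over {0,1,2})\<close>

definition topv :: "nat \<Rightarrow> nat list" where "topv m = replicate m 0"
definition leftv :: "nat \<Rightarrow> nat list" where "leftv m = replicate m 1"
definition rightv :: "nat \<Rightarrow> nat list" where "rightv m = replicate m 2"

fun sigmaV :: "nat \<Rightarrow> nat list set" where
  "sigmaV 0 = {[]}"
| "sigmaV (Suc 0) = {[0], [1], [2]}"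
| "sigmaV (Suc (Suc n)) = (\<Union>i\<in>{0,1,2}. (\<lambda>w. i # w) ` sigmaV (Suc n))"

fun sigmaE :: "nat \<Rightarrow> nat list set set" where
  "sigmaE 0 = {}"
| "sigmaE (Suc 0) = {{[0], [1]}, {[0], [2]}, {[1], [2]}}"
| "sigmaE (Suc (Suc n)) =
     (\<Union>i\<in>{0,1,2}. (\<lambda>e. (\<lambda>w. i # w) ` e) ` sigmaE (Suc n))
     \<union> {{0 # leftv (Suc n), 1 # topv (Suc n)},
        {0 # rightv (Suc n), 2 # topv (Suc n)},
        {1 # rightv (Suc n), 2 # leftv (Suc n)}}"

text \<open>Outmost vertices of Sigma_n are topv n, leftv n, rightv n.\<close>

definition Hn :: "nat \<Rightarrow> real \<Rightarrow> real \<Rightarrow> real" where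
  "Hn n x y = tutte (sigmaV n) (sigmaE n) x y"

definition weight :: "nat \<Rightarrow> nat list set set \<Rightarrow> real \<Rightarrow> real \<Rightarrow> real" where
  "weight n A x y = (x - 1) ^ (rk (sigmaV n) (sigmaE n) - rk (sigmaV n) A) * (y - 1) ^ nullity (sigmaV n) A"

definition H2 :: "nat \<Rightarrow> real \<Rightarrow> real \<Rightarrow> real" where
  "H2 n x y = (\<Sum>A | A \<subseteq> sigmaE n \<and> same_comp A (topv n) (leftv n) \<and> same_comp A (topv n) (rightv n).
                 weight n A x y)"

definition H1 :: "nat \<Rightarrow> real \<Rightarrow> real \<Rightarrow> real" where
  "H1 n x y = (\<Sum>A | A \<subseteq> sigmaE n \<and> same_comp A (leftv n) (rightv n) \<and> \<not> same_comp A (topv n) (leftv n).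
                 weight n A x y)"

definition H0 :: "nat \<Rightarrow> real \<Rightarrow> real \<Rightarrow> real" where
  "H0 n x y = (\<Sum>A | A \<subseteq> sigmaE n \<and> \<not> same_comp A (leftv n) (rightv n)
                 \<and> \<not> same_comp A (topv n) (leftv n) \<and> \<not> same_comp A (topv n) (rightv n).
                 weight n A x y)"

text \<open>N_n = H_{1,n}/(x-1) and M_n = H_{0,n}/(x-1)^2 as polynomials: in each summand of
  H_{1,n} (resp. H_{0,n}) the exponent of (x-1) is at least 1 (resp. 2), so the quotient
  polynomial is obtained by lowering that exponent by 1 (resp. 2).\<close>
definition Nn :: "nat \<Rightarrow> real \<Rightarrow> real \<Rightarrow> real" where
  "Nn n x y = (\<Sum>A | A \<subseteq> sigmaE n \<and> same_comp A (leftv n) (rightv n) \<and> \<not> same_comp A (topv n) (leftv n).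
     (x - 1) ^ (rk (sigmaV n) (sigmaE n) - rk (sigmaV n) A - 1) * (y - 1) ^ nullity (sigmaV n) A)"

definition Mn :: "nat \<Rightarrow> real \<Rightarrow> real \<Rightarrow> real" where
  "Mn n x y = (\<Sum>A | A \<subseteq> sigmaE n \<and> \<not> same_comp A (leftv n) (rightv n)
                 \<and> \<not> same_comp A (topv n) (leftv n) \<and> \<not> same_comp A (topv n) (rightv n).
     (x - 1) ^ (rk (sigmaV n) (sigmaE n) - rk (sigmaV n) A - 2) * (y - 1) ^ nullity (sigmaV n) A)"

end

theory Submission
  imports Defs
begin

(*
  At x = 1, y = 2 the weight of a spanning subgraph A of Sigma_n is 0^(k(A) - 1), resp.
  0^(k(A) - 2), 0^(k(A) - 3) in N_n, M_n.  Hence H_n(1,2) counts connected spanning subgraphs,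
  and H_{2,n}(1,2), N_n(1,2), M_n(1,2) count subgraphs with the prescribed connectivity of the
  outmost vertices and no further component, i.e. in which every vertex is joined to an
  outmost vertex ("anchored").  So all of them count subgraphs of a given PROFILE: the
  partition of the outmost vertices induced by A, or None if A is not anchored.

  A spanning subgraph of Sigma_(n+1) is the same as three spanning subgraphs of Sigma_n
  (its pieces in the three copies) plus three bits (the bridges).  Connectivity between the
  nine outmost vertices of the copies is reachability in a nine-node skeleton graph, so the
  profile is a computable function of the pieces' profiles and the bits.  Counting by
  profile gives a cubic recursion; the rotation 0 -> 1 -> 2 -> 0 of letters shows the three
  profiles with one outmost vertex apart to be equally frequent, and evaluating the
  recursion by simplification gives the stated identities.
*)

section \<open>Connectivity in arbitrary graphs\<close>

lemma adj_iff: "(u, v) \<in> adj A \<longleftrightarrow> {u, v} \<in> A"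
  by (simp add: adj_def)

lemma sym_adj: "sym (adj A)"
  unfolding sym_def adj_def by (auto simp: insert_commute)

lemma same_comp_refl [simp]: "same_comp A u u"
  by (simp add: same_comp_def)

lemma same_comp_sym: "same_comp A u v \<Longrightarrow> same_comp A v u"
  using sym_rtrancl[OF sym_adj, of A] unfolding same_comp_def sym_def by blast

lemma same_comp_trans: "same_comp A u v \<Longrightarrow> same_comp A v w \<Longrightarrow> same_comp A u w"
  unfolding same_comp_def by (rule rtrancl_trans)

lemma same_comp_edge: "{u, v} \<in> A \<Longrightarrow> same_comp A u v"
  unfolding same_comp_def by (simp add: adj_iff r_into_rtrancl)

lemma same_comp_mono: "A \<subseteq> B \<Longrightarrow> same_comp A u v \<Longrightarrow> same_comp B u v"
  using rtrancl_mono[of "adj A" "adj B"] unfolding same_comp_def adj_def by auto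

lemma same_comp_image: "same_comp A u v \<Longrightarrow> same_comp (image f ` A) (f u) (f v)"
  unfolding same_comp_def
proof (induction rule: rtrancl_induct)
  case (step y z)
  then have "{f y, f z} \<in> image f ` A"
    by (metis adj_iff image_empty image_insert imageI)
  then show ?case using step by (meson adj_iff rtrancl_into_rtrancl)
qed simp

definition conn_rel :: "'a set \<Rightarrow> 'a set set \<Rightarrow> ('a \<times> 'a) set" where
  "conn_rel V A = {(u, v). u \<in> V \<and> v \<in> V \<and> (u, v) \<in> (adj A)\<^sup>*}"

lemma ncomp_eq_card_classes: "ncomp V A = card ((\<lambda>v. conn_rel V A `` {v}) ` V)"
  unfolding ncomp_def conn_rel_def[symmetric] quotient_def by (simp add: UNION_singleton_eq_range)

lemma class_eq_iff:
  assumes "u \<in> V" "v \<in> V"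
  shows "conn_rel V A `` {u} = conn_rel V A `` {v} \<longleftrightarrow> same_comp A u v"
proof
  assume "conn_rel V A `` {u} = conn_rel V A `` {v}"
  then have "v \<in> conn_rel V A `` {u}" using assms by (auto simp: conn_rel_def)
  then show "same_comp A u v" by (simp add: conn_rel_def same_comp_def)
next
  assume uv: "same_comp A u v"
  have "same_comp A u w \<longleftrightarrow> same_comp A v w" for w
    using uv same_comp_sym same_comp_trans by metis
  then show "conn_rel V A `` {u} = conn_rel V A `` {v}"
    using assms by (auto simp: conn_rel_def same_comp_def)
qed

lemma ncomp_le_card: "finite V \<Longrightarrow> ncomp V A \<le> card V"
  unfolding ncomp_eq_card_classes by (rule card_image_le)

lemma ncomp_bounds_by_representatives:
  assumes fin: "finite V" and Os: "Os \<subseteq> V"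
    and apart: "\<forall>p\<in>Os. \<forall>q\<in>Os. same_comp A p q \<longrightarrow> p = q"
  shows "card Os \<le> ncomp V A"
    and "ncomp V A \<le> card Os \<longleftrightarrow> (\<forall>v\<in>V. \<exists>p\<in>Os. same_comp A p v)"
proof -
  let ?cls = "\<lambda>v. conn_rel V A `` {v}"
  have "inj_on ?cls Os"
  proof (rule inj_onI)
    fix p q assume "p \<in> Os" "q \<in> Os" "?cls p = ?cls q"
    then show "p = q" using class_eq_iff[of p V q A] Os apart by blast
  qed
  then have card_O: "card (?cls ` Os) = card Os" by (rule card_image)
  have sub: "?cls ` Os \<subseteq> ?cls ` V" using Os by blast
  show "card Os \<le> ncomp V A"
    unfolding ncomp_eq_card_classes using card_mono[OF finite_imageI[OF fin] sub] card_O by simp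
  have "ncomp V A \<le> card Os \<longleftrightarrow> ?cls ` V = ?cls ` Os"
  proof
    assume "ncomp V A \<le> card Os"
    then have "?cls ` Os = ?cls ` V"
      by (intro card_seteq[OF finite_imageI[OF fin] sub]) (simp add: ncomp_eq_card_classes card_O)
    then show "?cls ` V = ?cls ` Os" by (rule sym)
  qed (simp add: ncomp_eq_card_classes card_O)
  also have "\<dots> \<longleftrightarrow> (\<forall>v\<in>V. \<exists>p\<in>Os. same_comp A p v)"
  proof
    assume eq: "?cls ` V = ?cls ` Os"
    show "\<forall>v\<in>V. \<exists>p\<in>Os. same_comp A p v"
    proof
      fix v assume v: "v \<in> V"
      then have "?cls v \<in> ?cls ` Os" unfolding eq[symmetric] by (rule imageI)
      then obtain p where p: "p \<in> Os" and "?cls v = ?cls p" by (rule imageE)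
      then have "same_comp A p v" using class_eq_iff[of p V v A] Os v by (simp add: subset_iff)
      then show "\<exists>p\<in>Os. same_comp A p v" using p by blast
    qed
  next
    assume reach: "\<forall>v\<in>V. \<exists>p\<in>Os. same_comp A p v"
    have "?cls v \<in> ?cls ` Os" if v: "v \<in> V" for v
    proof -
      obtain p where p: "p \<in> Os" and "same_comp A p v" using reach v by blast
      then have "?cls p = ?cls v" using class_eq_iff[of p V v A] Os v by (simp add: subset_iff)
      then show ?thesis using p by (metis imageI)
    qed
    then show "?cls ` V = ?cls ` Os" using sub by blast
  qed
  finally show "ncomp V A \<le> card Os \<longleftrightarrow> (\<forall>v\<in>V. \<exists>p\<in>Os. same_comp A p v)" .
qed

section \<open>Labellings of reflexive-transitive closures\<close>

text \<open>A labelling \<open>L\<close> represents \<open>R\<^sup>*\<close> if equal labels mean connected.  Adding the edge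
  \<open>{u, v}\<close> is represented by relabelling the class of \<open>v\<close> with the label of \<open>u\<close> (one
  union step of union-find); this makes connectivity of small graphs computable by \<open>simp\<close>.\<close>
definition merge :: "('a \<Rightarrow> 'b) \<Rightarrow> 'a \<Rightarrow> 'a \<Rightarrow> 'a \<Rightarrow> 'b" where
  "merge L u v x = (if L x = L v then L u else L x)"

lemma merge_represents:
  assumes L: "\<forall>x y. L x = L y \<longleftrightarrow> (x, y) \<in> R\<^sup>*"
  shows "\<forall>x y. merge L u v x = merge L u v y \<longleftrightarrow> (x, y) \<in> (R \<union> {(u, v), (v, u)})\<^sup>*"
proof (intro allI iffI)
  let ?R = "R \<union> {(u, v), (v, u)}"
  have lift: "(a, b) \<in> R\<^sup>* \<Longrightarrow> (a, b) \<in> ?R\<^sup>*" for a b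
    by (meson Un_upper1 rtrancl_mono subsetD)
  have uv: "(u, v) \<in> ?R\<^sup>*" "(v, u) \<in> ?R\<^sup>*" by auto
  fix x y
  show "(x, y) \<in> ?R\<^sup>* \<Longrightarrow> merge L u v x = merge L u v y"
  proof (induction rule: rtrancl_induct)
    case (step y z)
    have "merge L u v y = merge L u v z"
    proof (cases "(y, z) \<in> R")
      case True
      then have "L y = L z" using L by auto
      then show ?thesis by (simp add: merge_def)
    next
      case False
      then have "(y, z) = (u, v) \<or> (y, z) = (v, u)" using step(2) by auto
      then show ?thesis by (auto simp: merge_def)
    qed
    then show ?case using step(3) by simp
  qed simp
  assume m: "merge L u v x = merge L u v y"
  consider "L x = L v" "L y = L v" | "L x = L v" "L y \<noteq> L v" | "L x \<noteq> L v" "L y = L v"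
    | "L x \<noteq> L v" "L y \<noteq> L v" by blast
  then show "(x, y) \<in> ?R\<^sup>*"
  proof cases
    case 1
    then show ?thesis using L lift by metis
  next
    case 2
    then have "(x, v) \<in> R\<^sup>*" "(u, y) \<in> R\<^sup>*" using m L by (metis merge_def)+
    then show ?thesis using lift uv(2) by (meson rtrancl_trans)
  next
    case 3
    then have "(x, u) \<in> R\<^sup>*" "(v, y) \<in> R\<^sup>*" using m L by (metis merge_def)+
    then show ?thesis using lift uv(1) by (meson rtrancl_trans)
  next
    case 4
    then have "L x = L y" using m by (simp add: merge_def)
    then show ?thesis using L lift by metis
  qed
qed

definition merge_if :: "bool \<Rightarrow> 'a \<Rightarrow> 'a \<Rightarrow> ('a \<Rightarrow> 'b) \<Rightarrow> 'a \<Rightarrow> 'b" where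
  "merge_if b u v L = (if b then merge L u v else L)"

definition link_if :: "bool \<Rightarrow> 'a \<Rightarrow> 'a \<Rightarrow> ('a \<times> 'a) set \<Rightarrow> ('a \<times> 'a) set" where
  "link_if b u v R = (if b then R \<union> {(u, v), (v, u)} else R)"

lemma merge_if_represents:
  assumes "\<forall>x y. L x = L y \<longleftrightarrow> (x, y) \<in> R\<^sup>*"
  shows "\<forall>x y. merge_if b u v L x = merge_if b u v L y \<longleftrightarrow> (x, y) \<in> (link_if b u v R)\<^sup>*"
  using merge_represents[OF assms] assms by (simp add: merge_if_def link_if_def)

lemma less_3_iff: "(i::nat) < 3 \<longleftrightarrow> i = 0 \<or> i = 1 \<or> i = 2"
  by auto

lemma all_less_3: "(\<forall>i<(3::nat). Q i) \<longleftrightarrow> Q 0 \<and> Q 1 \<and> Q 2"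
  by (auto simp: less_3_iff)

lemma ex_less_3: "(\<exists>i<(3::nat). Q i) \<longleftrightarrow> Q 0 \<or> Q 1 \<or> Q 2"
  by (auto simp: less_3_iff)

section \<open>The graphs Sigma_n\<close>

definition corner :: "nat \<Rightarrow> nat \<Rightarrow> nat list" where
  "corner n c = replicate n c"

definition bridge :: "nat \<Rightarrow> nat \<Rightarrow> nat \<Rightarrow> nat list set" where
  "bridge n i j = {i # corner n j, j # corner n i}"

lemma outmost_corners: "topv n = corner n 0" "leftv n = corner n 1" "rightv n = corner n 2"
  by (simp_all add: corner_def topv_def leftv_def rightv_def)

lemma corner_Suc: "corner (Suc n) c = c # corner n c"
  by (simp add: corner_def)

lemma bridge_sym: "bridge n i j = bridge n j i"
  by (simp add: bridge_def insert_commute)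

lemma bridges_distinct: "bridge n 0 1 \<noteq> bridge n 0 2" "bridge n 0 1 \<noteq> bridge n 1 2"
    "bridge n 0 2 \<noteq> bridge n 1 2"
  by (auto simp: bridge_def doubleton_eq_iff)

text \<open>Uniform one-step recursions, valid also for \<open>n = 0\<close> (Sigma_0 is a single vertex).\<close>
lemma sigmaV_Suc: "sigmaV (Suc n) = (\<Union>i\<in>{0,1,2}. Cons i ` sigmaV n)"
  by (cases n) auto

lemma sigmaE_Suc:
  "sigmaE (Suc n) = (\<Union>i\<in>{0,1,2}. image (Cons i) ` sigmaE n)
                     \<union> {bridge n 0 1, bridge n 0 2, bridge n 1 2}"
  by (cases n) (auto simp: bridge_def corner_def topv_def leftv_def rightv_def)

lemma finite_sigmaV: "finite (sigmaV n)"
  by (induction n) (auto simp: sigmaV_Suc)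

lemma finite_sigmaE: "finite (sigmaE n)"
  by (induction n) (auto simp: sigmaE_Suc)

lemma Cons_in_sigmaV: "i < 3 \<Longrightarrow> v \<in> sigmaV n \<Longrightarrow> i # v \<in> sigmaV (Suc n)"
  unfolding sigmaV_Suc less_3_iff by blast

lemma corner_in_sigmaV: "c < 3 \<Longrightarrow> corner n c \<in> sigmaV n"
  by (induction n) (auto simp: corner_Suc Cons_in_sigmaV corner_def)

lemma edge_nonempty: "e \<in> sigmaE n \<Longrightarrow> e \<noteq> {}"
  by (induction n arbitrary: e) (auto simp: sigmaE_Suc bridge_def)

lemma image_Cons_eq: "e \<noteq> {} \<Longrightarrow> Cons i ` e = Cons j ` e' \<Longrightarrow> i = j \<and> e = e'"
proof -
  assume ne: "e \<noteq> {}" and eq: "Cons i ` e = Cons j ` e'"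
  then obtain u where "u \<in> e" by auto
  then have "i = j" using eq by (metis imageE imageI list.inject)
  moreover have "inj (Cons i)" by (rule injI) simp
  ultimately show ?thesis using eq by (simp add: inj_image_eq_iff)
qed

lemma image_Cons_neq_bridge: "e \<noteq> {} \<Longrightarrow> i \<noteq> j \<Longrightarrow> Cons k ` e \<noteq> bridge n i j"
proof
  assume "i \<noteq> j" "Cons k ` e = bridge n i j"
  then have "i # corner n j \<in> Cons k ` e" "j # corner n i \<in> Cons k ` e" by (auto simp: bridge_def)
  then show False using \<open>i \<noteq> j\<close> by auto
qed

section \<open>Spanning subgraphs of Sigma_(n+1) as triples of subgraphs of Sigma_n\<close>

definition piece :: "nat \<Rightarrow> nat \<Rightarrow> nat list set set \<Rightarrow> nat list set set" where
  "piece n i A = {e \<in> sigmaE n. Cons i ` e \<in> A}"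

definition has_bridge :: "nat \<Rightarrow> nat list set set \<Rightarrow> nat \<Rightarrow> nat \<Rightarrow> bool" where
  "has_bridge n A i j \<longleftrightarrow> bridge n i j \<in> A"

lemma same_comp_piece: "same_comp (piece n i A) u v \<Longrightarrow> same_comp A (i # u) (i # v)"
proof -
  have "image (Cons i) ` piece n i A \<subseteq> A" by (auto simp: piece_def)
  moreover assume "same_comp (piece n i A) u v"
  then have "same_comp (image (Cons i) ` piece n i A) (i # u) (i # v)" by (rule same_comp_image)
  ultimately show ?thesis by (rule same_comp_mono)
qed

lemma edge_cases:
  assumes "A \<subseteq> sigmaE (Suc n)" "{x, y} \<in> A"
  shows "(\<exists>i u v. i < 3 \<and> x = i # u \<and> y = i # v \<and> {u, v} \<in> piece n i A)
       \<or> (\<exists>i j. i < 3 \<and> j < 3 \<and> i \<noteq> j \<and> x = i # corner n j \<and> y = j # corner n i)"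
proof -
  have "{x, y} \<in> sigmaE (Suc n)" using assms by auto
  then consider (inner) i e where "i \<in> {0,1,2}" "e \<in> sigmaE n" "{x, y} = Cons i ` e"
    | (bridge) "{x, y} \<in> {bridge n 0 1, bridge n 0 2, bridge n 1 2}"
    unfolding sigmaE_Suc by blast
  then show ?thesis
  proof cases
    case inner
    have "x \<in> Cons i ` e" "y \<in> Cons i ` e" using inner(3) by auto
    then obtain u v where uv: "u \<in> e" "v \<in> e" "x = i # u" "y = i # v" by auto
    then have "Cons i ` {u, v} = Cons i ` e" using inner(3) by auto
    moreover have "inj (Cons i)" by (rule injI) simp
    ultimately have "e = {u, v}" by (metis inj_image_eq_iff)
    then have "{u, v} \<in> piece n i A" using inner assms(2) by (simp add: piece_def)
    then show ?thesis using uv inner(1) by auto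
  next
    case bridge
    then show ?thesis unfolding bridge_def by (auto simp: doubleton_eq_iff)
  qed
qed

type_synonym parts = "nat list set set \<times> nat list set set \<times> nat list set set \<times> bool \<times> bool \<times> bool"

definition Parts :: "nat \<Rightarrow> parts set" where
  "Parts n = Pow (sigmaE n) \<times> Pow (sigmaE n) \<times> Pow (sigmaE n) \<times> UNIV"

definition assemble :: "nat \<Rightarrow> parts \<Rightarrow> nat list set set" where
  "assemble n x = (case x of (A0, A1, A2, b01, b02, b12) \<Rightarrow>
     image (Cons 0) ` A0 \<union> image (Cons 1) ` A1 \<union> image (Cons 2) ` A2 \<union>
     (if b01 then {bridge n 0 1} else {}) \<union> (if b02 then {bridge n 0 2} else {})
     \<union> (if b12 then {bridge n 1 2} else {}))"

definition decompose :: "nat \<Rightarrow> nat list set set \<Rightarrow> parts" where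
  "decompose n A = (piece n 0 A, piece n 1 A, piece n 2 A,
                    has_bridge n A 0 1, has_bridge n A 0 2, has_bridge n A 1 2)"

lemma image_Cons_sigmaE_subset:
  assumes "i \<in> {0,1,2}"
  shows "image (Cons i) ` sigmaE n \<subseteq> sigmaE (Suc n)"
proof -
  have "image (Cons i) ` sigmaE n \<subseteq> (\<Union>i\<in>{0,1,2}. image (Cons i) ` sigmaE n)"
    using assms by (rule UN_upper)
  then show ?thesis unfolding sigmaE_Suc by (rule subset_trans) (rule Un_upper1)
qed

lemma bridges_subset_sigmaE: "{bridge n 0 1, bridge n 0 2, bridge n 1 2} \<subseteq> sigmaE (Suc n)"
  unfolding sigmaE_Suc by (rule Un_upper2)

lemma assemble_subset:
  assumes "x \<in> Parts n"
  shows "assemble n x \<subseteq> sigmaE (Suc n)"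
proof -
  obtain A0 A1 A2 b01 b02 b12 where x: "x = (A0, A1, A2, b01, b02, b12)" by (cases x) auto
  have "image (Cons i) ` B \<subseteq> sigmaE (Suc n)" if "B \<subseteq> sigmaE n" "i \<in> {0,1,2}" for i B
    using image_mono[OF that(1)] image_Cons_sigmaE_subset[OF that(2)] by (rule subset_trans)
  moreover have "A0 \<subseteq> sigmaE n" "A1 \<subseteq> sigmaE n" "A2 \<subseteq> sigmaE n"
    using assms x by (auto simp: Parts_def)
  ultimately show ?thesis
    using bridges_subset_sigmaE[of n] unfolding x assemble_def prod.case by (intro Un_least) simp_all
qed

lemma decompose_in_Parts: "decompose n A \<in> Parts n"
  by (auto simp: decompose_def Parts_def piece_def)

lemma assemble_decompose:
  assumes "A \<subseteq> sigmaE (Suc n)"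
  shows "assemble n (decompose n A) = A"
proof
  show "assemble n (decompose n A) \<subseteq> A"
    unfolding assemble_def decompose_def piece_def has_bridge_def by auto
  show "A \<subseteq> assemble n (decompose n A)"
  proof
    fix e assume "e \<in> A"
    then have "e \<in> sigmaE (Suc n)" using assms by auto
    then consider (inner) i e' where "i \<in> {0,1,2}" "e' \<in> sigmaE n" "e = Cons i ` e'"
      | (bridge) "e \<in> {bridge n 0 1, bridge n 0 2, bridge n 1 2}" unfolding sigmaE_Suc by blast
    then show "e \<in> assemble n (decompose n A)"
    proof cases
      case inner
      then show ?thesis using \<open>e \<in> A\<close> unfolding assemble_def decompose_def piece_def by auto
    next
      case bridge
      then show ?thesis using \<open>e \<in> A\<close> unfolding assemble_def decompose_def has_bridge_def by auto
    qed
  qed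
qed

lemma piece_assemble:
  assumes "(A0, A1, A2, b01, b02, b12) \<in> Parts n" "i \<in> {0,1,2}"
  shows "piece n i (assemble n (A0, A1, A2, b01, b02, b12)) = [A0, A1, A2] ! i"
proof -
  have sub: "A0 \<subseteq> sigmaE n" "A1 \<subseteq> sigmaE n" "A2 \<subseteq> sigmaE n" using assms by (auto simp: Parts_def)
  have "Cons i ` e \<in> assemble n (A0, A1, A2, b01, b02, b12) \<longleftrightarrow> e \<in> [A0, A1, A2] ! i"
    if "e \<in> sigmaE n" for e
  proof -
    have ne: "e \<noteq> {}" using edge_nonempty that by blast
    have "Cons i ` e \<noteq> bridge n 0 1" "Cons i ` e \<noteq> bridge n 0 2" "Cons i ` e \<noteq> bridge n 1 2"
      using image_Cons_neq_bridge[OF ne] by auto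
    moreover have "Cons i ` e \<in> image (Cons j) ` B \<longleftrightarrow> i = j \<and> e \<in> B" for j B
      using image_Cons_eq[OF ne] by blast
    ultimately show ?thesis using assms(2) unfolding assemble_def by auto
  qed
  then show ?thesis using sub assms(2) unfolding piece_def by auto
qed

lemma has_bridge_assemble:
  assumes "(A0, A1, A2, b01, b02, b12) \<in> Parts n"
  shows "has_bridge n (assemble n (A0, A1, A2, b01, b02, b12)) 0 1 = b01"
    and "has_bridge n (assemble n (A0, A1, A2, b01, b02, b12)) 0 2 = b02"
    and "has_bridge n (assemble n (A0, A1, A2, b01, b02, b12)) 1 2 = b12"
proof -
  have no_piece: "bridge n i j \<notin> image (Cons k) ` B" if "B \<subseteq> sigmaE n" "i \<noteq> j" for i j k B
  proof
    assume "bridge n i j \<in> image (Cons k) ` B"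
    then obtain e where "e \<in> B" "bridge n i j = Cons k ` e" by blast
    moreover have "e \<noteq> {}" using edge_nonempty \<open>e \<in> B\<close> that(1) by blast
    ultimately show False using image_Cons_neq_bridge[OF _ that(2)] by metis
  qed
  have "A0 \<subseteq> sigmaE n" "A1 \<subseteq> sigmaE n" "A2 \<subseteq> sigmaE n" using assms by (auto simp: Parts_def)
  note no_pieces = no_piece[OF this(1)] no_piece[OF this(2)] no_piece[OF this(3)]
  show "has_bridge n (assemble n (A0, A1, A2, b01, b02, b12)) 0 1 = b01"
    and "has_bridge n (assemble n (A0, A1, A2, b01, b02, b12)) 0 2 = b02"
    and "has_bridge n (assemble n (A0, A1, A2, b01, b02, b12)) 1 2 = b12"
    unfolding has_bridge_def assemble_def
    using no_pieces[of 0 1] no_pieces[of 0 2] no_pieces[of 1 2] bridges_distinct bridges_distinct[THEN not_sym]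
    by auto
qed

lemma decompose_assemble: "x \<in> Parts n \<Longrightarrow> decompose n (assemble n x) = x"
  using piece_assemble has_bridge_assemble by (cases x) (simp add: decompose_def)

lemma bij_assemble: "bij_betw (assemble n) (Parts n) {A. A \<subseteq> sigmaE (Suc n)}"
proof (rule bij_betw_byWitness[where f' = "decompose n"])
  show "\<forall>x\<in>Parts n. decompose n (assemble n x) = x" using decompose_assemble by blast
  show "\<forall>A\<in>{A. A \<subseteq> sigmaE (Suc n)}. assemble n (decompose n A) = A" using assemble_decompose by blast
  show "assemble n ` Parts n \<subseteq> {A. A \<subseteq> sigmaE (Suc n)}" using assemble_subset by blast
  show "decompose n ` {A. A \<subseteq> sigmaE (Suc n)} \<subseteq> Parts n" using decompose_in_Parts by blast
qed

section \<open>The skeleton of a spanning subgraph of Sigma_(n+1)\<close>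

text \<open>The skeleton has the nine nodes \<open>(i, c)\<close>, standing for corner \<open>c\<close> of copy \<open>i\<close>; two
  corners of one copy are linked if the piece connects them, and a bridge of \<open>A\<close> links
  \<open>(i, j)\<close> with \<open>(j, i)\<close>.\<close>
definition skeleton :: "nat \<Rightarrow> nat list set set \<Rightarrow> ((nat \<times> nat) \<times> (nat \<times> nat)) set" where
  "skeleton n A =
     {((i, c), (i, d)) | i c d. i < 3 \<and> c < 3 \<and> d < 3 \<and> same_comp (piece n i A) (corner n c) (corner n d)}
     \<union> {((i, j), (j, i)) | i j. i < 3 \<and> j < 3 \<and> i \<noteq> j \<and> has_bridge n A i j}"

lemma path_from_corner:
  assumes A: "A \<subseteq> sigmaE (Suc n)" and path: "same_comp A (i # corner n c) x" and "i < 3" "c < 3"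
  shows "\<exists>j d w. j < 3 \<and> d < 3 \<and> x = j # w \<and> ((i, c), (j, d)) \<in> (skeleton n A)\<^sup>*
           \<and> same_comp (piece n j A) (corner n d) w"
  using path unfolding same_comp_def[of A]
proof (induction rule: rtrancl_induct)
  case base
  show ?case
    by (rule exI[of _ i], rule exI[of _ c], rule exI[of _ "corner n c"]) (simp add: assms(3,4))
next
  case (step y z)
  then obtain j d w where IH: "j < 3" "d < 3" "y = j # w" "((i, c), (j, d)) \<in> (skeleton n A)\<^sup>*"
      "same_comp (piece n j A) (corner n d) w" by blast
  have e: "{y, z} \<in> A" using step(2) by (simp add: adj_iff)
  from edge_cases[OF A e] show ?case
  proof
    assume "\<exists>i u v. i < 3 \<and> y = i # u \<and> z = i # v \<and> {u, v} \<in> piece n i A"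
    then obtain v where v: "z = j # v" "{w, v} \<in> piece n j A" using IH(3) by auto
    then have "same_comp (piece n j A) (corner n d) v"
      using IH(5) same_comp_edge same_comp_trans by metis
    then show ?thesis using IH(1,2,4) v(1) by blast
  next
    assume "\<exists>i' j'. i' < 3 \<and> j' < 3 \<and> i' \<noteq> j' \<and> y = i' # corner n j' \<and> z = j' # corner n i'"
    then obtain j' where j': "j' < 3" "j \<noteq> j'" "w = corner n j'" "z = j' # corner n j"
      using IH(3) by auto
    have "((j, d), (j, j')) \<in> skeleton n A" using IH j' unfolding skeleton_def by auto
    moreover have "((j, j'), (j', j)) \<in> skeleton n A"
      using IH j' e unfolding skeleton_def has_bridge_def bridge_def by auto
    ultimately have "((i, c), (j', j)) \<in> (skeleton n A)\<^sup>*" using IH(4)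
      by (meson rtrancl.rtrancl_into_rtrancl)
    moreover have "same_comp (piece n j' A) (corner n j) (corner n j)" by simp
    ultimately show ?thesis using j' IH(1) by blast
  qed
qed

lemma skeleton_path_imp_same_comp:
  assumes "((i, c), (j, d)) \<in> (skeleton n A)\<^sup>*"
  shows "same_comp A (i # corner n c) (j # corner n d)"
  using assms
proof (induction rule: rtrancl_induct2)
  case (step a b a' b')
  from step(2) have "same_comp A (a # corner n b) (a' # corner n b')"
    unfolding skeleton_def has_bridge_def bridge_def by (auto intro: same_comp_piece same_comp_edge)
  then show ?case by (rule same_comp_trans[OF step(3)])
qed simp

lemma same_comp_corners_iff_skeleton:
  assumes "A \<subseteq> sigmaE (Suc n)" "i < 3" "c < 3" "j < 3" "d < 3"
  shows "same_comp A (i # corner n c) (j # corner n d) \<longleftrightarrow> ((i, c), (j, d)) \<in> (skeleton n A)\<^sup>*"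
proof
  assume "same_comp A (i # corner n c) (j # corner n d)"
  from path_from_corner[OF assms(1) this assms(2,3)] obtain d' where
    "d' < 3" "((i, c), (j, d')) \<in> (skeleton n A)\<^sup>*"
    "same_comp (piece n j A) (corner n d') (corner n d)" by auto
  moreover have "((j, d'), (j, d)) \<in> skeleton n A"
    using calculation assms by (auto simp: skeleton_def)
  ultimately show "((i, c), (j, d)) \<in> (skeleton n A)\<^sup>*" by auto
qed (rule skeleton_path_imp_same_comp)

lemma path_leaving_copy:
  assumes A: "A \<subseteq> sigmaE (Suc n)" and path: "same_comp A (i # v) x"
  shows "(\<exists>c < 3. same_comp (piece n i A) v (corner n c))
       \<or> (\<exists>w. x = i # w \<and> same_comp (piece n i A) v w)"
  using path unfolding same_comp_def[of A]
proof (induction rule: rtrancl_induct)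
  case (step y z)
  show ?case
  proof (cases "\<exists>c < 3. same_comp (piece n i A) v (corner n c)")
    case False
    then obtain w where w: "y = i # w" "same_comp (piece n i A) v w" using step(3) by auto
    have e: "{y, z} \<in> A" using step(2) by (simp add: adj_iff)
    from edge_cases[OF A e] show ?thesis
    proof
      assume "\<exists>i u v. i < 3 \<and> y = i # u \<and> z = i # v \<and> {u, v} \<in> piece n i A"
      then obtain u where "z = i # u" "{w, u} \<in> piece n i A" using w(1) by auto
      then show ?thesis using w same_comp_edge same_comp_trans by metis
    next
      assume "\<exists>i' j'. i' < 3 \<and> j' < 3 \<and> i' \<noteq> j' \<and> y = i' # corner n j' \<and> z = j' # corner n i'"
      then obtain j' where "j' < 3" "w = corner n j'" using w(1) by auto
      then show ?thesis using w False by auto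
    qed
  qed simp
qed simp

section \<open>Anchored subgraphs\<close>

text \<open>\<open>A\<close> is anchored if every vertex is connected to an outmost vertex; these are
  the subgraphs whose number of components equals the number of classes of outmost vertices.\<close>
definition anchored :: "nat \<Rightarrow> nat list set set \<Rightarrow> bool" where
  "anchored n A \<longleftrightarrow> (\<forall>v\<in>sigmaV n. \<exists>c<3. same_comp A (corner n c) v)"

lemma anchored_Suc_iff:
  assumes A: "A \<subseteq> sigmaE (Suc n)"
  shows "anchored (Suc n) A \<longleftrightarrow> (\<forall>i<3. anchored n (piece n i A)) \<and>
           (\<forall>i<3. \<forall>c<3. \<exists>g<3. ((i, c), (g, g)) \<in> (skeleton n A)\<^sup>*)"
proof
  assume anc: "anchored (Suc n) A"
  have "anchored n (piece n i A)" if "i < 3" for i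
    unfolding anchored_def
  proof
    fix v assume "v \<in> sigmaV n"
    then have "i # v \<in> sigmaV (Suc n)" using that by (simp add: Cons_in_sigmaV)
    then obtain c' where c': "c' < 3" "same_comp A (corner (Suc n) c') (i # v)"
      using anc by (auto simp: anchored_def)
    then have "same_comp A (i # v) (c' # corner n c')" by (simp add: corner_Suc same_comp_sym)
    from path_leaving_copy[OF A this] have "\<exists>c<3. same_comp (piece n i A) v (corner n c)"
      using c'(1) by auto
    then obtain c where "c < 3" "same_comp (piece n i A) v (corner n c)" by blast
    then show "\<exists>c<3. same_comp (piece n i A) (corner n c) v"
      using same_comp_sym[of "piece n i A" v "corner n c"] by blast
  qed
  moreover have "\<exists>g<3. ((i, c), (g, g)) \<in> (skeleton n A)\<^sup>*" if "i < 3" "c < 3" for i c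
  proof -
    have "i # corner n c \<in> sigmaV (Suc n)" using that corner_in_sigmaV by (simp add: Cons_in_sigmaV)
    then obtain g where "g < 3" "same_comp A (corner (Suc n) g) (i # corner n c)"
      using anc by (auto simp: anchored_def)
    then have "same_comp A (i # corner n c) (g # corner n g)" by (simp add: corner_Suc same_comp_sym)
    then show ?thesis using same_comp_corners_iff_skeleton[OF A that \<open>g < 3\<close> \<open>g < 3\<close>] \<open>g < 3\<close> by blast
  qed
  ultimately show "(\<forall>i<3. anchored n (piece n i A)) \<and>
      (\<forall>i<3. \<forall>c<3. \<exists>g<3. ((i, c), (g, g)) \<in> (skeleton n A)\<^sup>*)" by blast
next
  assume h: "(\<forall>i<3. anchored n (piece n i A)) \<and>
      (\<forall>i<3. \<forall>c<3. \<exists>g<3. ((i, c), (g, g)) \<in> (skeleton n A)\<^sup>*)"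
  show "anchored (Suc n) A" unfolding anchored_def
  proof
    fix v assume "v \<in> sigmaV (Suc n)"
    then obtain i v' where iv: "i < 3" "v = i # v'" "v' \<in> sigmaV n" by (auto simp: sigmaV_Suc)
    have "anchored n (piece n i A)" using h iv(1) by blast
    then obtain c where c: "c < 3" "same_comp (piece n i A) (corner n c) v'"
      using iv(3) unfolding anchored_def by blast
    obtain g where g: "g < 3" "((i, c), (g, g)) \<in> (skeleton n A)\<^sup>*" using h iv c by blast
    have "same_comp A (g # corner n g) (i # corner n c)"
      using skeleton_path_imp_same_comp[OF g(2)] by (rule same_comp_sym)
    moreover have "same_comp A (i # corner n c) v" using same_comp_piece[OF c(2)] iv by simp
    ultimately have "same_comp A (corner (Suc n) g) v" unfolding corner_Suc by (rule same_comp_trans)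
    then show "\<exists>c<3. same_comp A (corner (Suc n) c) v" using g(1) by blast
  qed
qed

section \<open>Profiles\<close>

text \<open>A partition of the corners \<open>{0, 1, 2}\<close> is encoded by its restricted growth string:
  the list of block labels, blocks being numbered in order of first occurrence.  The
  arguments say whether corners 0-1, 0-2 and 1-2 lie in a common block.\<close>
definition partition_code :: "bool \<Rightarrow> bool \<Rightarrow> bool \<Rightarrow> nat list" where
  "partition_code a b c = [0, if a then 0 else 1, if b then 0 else if c then 1 else 2]"

abbreviation joined :: "nat list" where "joined \<equiv> [0, 0, 0]"
abbreviation top_apart :: "nat list" where "top_apart \<equiv> [0, 1, 1]"
abbreviation left_apart :: "nat list" where "left_apart \<equiv> [0, 1, 0]"
abbreviation right_apart :: "nat list" where "right_apart \<equiv> [0, 0, 2]"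
abbreviation all_apart :: "nat list" where "all_apart \<equiv> [0, 1, 2]"

lemma partition_code_label_eq:
  fixes R :: "nat \<Rightarrow> nat \<Rightarrow> bool"
  assumes refl: "\<And>a. R a a" and sym: "\<And>a b. R a b \<Longrightarrow> R b a"
    and trans: "\<And>a b c. R a b \<Longrightarrow> R b c \<Longrightarrow> R a c" and "a < 3" "b < 3"
  shows "partition_code (R 0 1) (R 0 2) (R 1 2) ! a = partition_code (R 0 1) (R 0 2) (R 1 2) ! b
         \<longleftrightarrow> R a b"
proof -
  have "R 1 0 = R 0 1" "R 2 0 = R 0 2" "R 2 1 = R 1 2" using sym by blast+
  moreover have "R 0 1 \<Longrightarrow> R 1 2 \<Longrightarrow> R 0 2" "R 0 1 \<Longrightarrow> R 0 2 \<Longrightarrow> R 1 2"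
    "R 0 2 \<Longrightarrow> R 1 2 \<Longrightarrow> R 0 1" using trans sym by blast+
  moreover have "R 0 0" "R 1 1" "R 2 2" using refl by blast+
  ultimately show ?thesis using assms(4,5) unfolding less_3_iff
    by (elim disjE) (auto simp: partition_code_def)
qed

definition profile :: "nat \<Rightarrow> nat list set set \<Rightarrow> nat list option" where
  "profile n A = (if anchored n A
     then Some (partition_code (same_comp A (corner n 0) (corner n 1))
                  (same_comp A (corner n 0) (corner n 2)) (same_comp A (corner n 1) (corner n 2)))
     else None)"

lemma profile_Some_iff:
  "profile n A = Some t \<longleftrightarrow> anchored n A \<and> t = partition_code (same_comp A (corner n 0) (corner n 1))
       (same_comp A (corner n 0) (corner n 2)) (same_comp A (corner n 1) (corner n 2))"
  by (auto simp: profile_def)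

lemma profile_label_eq:
  assumes "profile n A = Some t" "c < 3" "d < 3"
  shows "t ! c = t ! d \<longleftrightarrow> same_comp A (corner n c) (corner n d)"
proof -
  have "t = partition_code (same_comp A (corner n 0) (corner n 1))
       (same_comp A (corner n 0) (corner n 2)) (same_comp A (corner n 1) (corner n 2))"
    using assms(1) by (simp add: profile_Some_iff)
  then show ?thesis
    by (simp only:)
       (rule partition_code_label_eq[where R = "\<lambda>a b. same_comp A (corner n a) (corner n b)"],
        auto intro: same_comp_sym same_comp_trans assms(2,3))
qed

text \<open>Only five partition codes occur (transitivity excludes \<open>[0, 0, 1]\<close>).\<close>
definition Codes :: "nat list set" where
  "Codes = {joined, top_apart, left_apart, right_apart, all_apart}"

definition Profiles :: "nat list option set" where
  "Profiles = insert None (Some ` Codes)"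

lemma profile_in_Profiles: "profile n A \<in> Profiles"
  using same_comp_trans[of A "corner n 0" "corner n 1" "corner n 2"]
  by (auto simp: profile_def Profiles_def Codes_def partition_code_def)

section \<open>The profile of a subgraph of Sigma_(n+1) is determined by its parts\<close>

definition piece_labels :: "nat list list \<Rightarrow> nat \<times> nat \<Rightarrow> nat \<times> nat" where
  "piece_labels ts x = (case x of (i, c) \<Rightarrow> if i < 3 \<and> c < 3 then (i, ts ! i ! c) else (i + 3, c))"

definition skeleton_labels :: "nat list list \<Rightarrow> bool \<Rightarrow> bool \<Rightarrow> bool \<Rightarrow> nat \<times> nat \<Rightarrow> nat \<times> nat" where
  "skeleton_labels ts b01 b02 b12 =
     merge_if b12 (1, 2) (2, 1) (merge_if b02 (0, 2) (2, 0) (merge_if b01 (0, 1) (1, 0) (piece_labels ts)))"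

definition piece_links :: "nat \<Rightarrow> nat list set set \<Rightarrow> ((nat \<times> nat) \<times> (nat \<times> nat)) set" where
  "piece_links n A = {((i, c), (i, d)) | i c d. i < 3 \<and> c < 3 \<and> d < 3
                        \<and> same_comp (piece n i A) (corner n c) (corner n d)}"

lemma skeleton_by_links:
  "skeleton n A = link_if (has_bridge n A 1 2) (1, 2) (2, 1) (link_if (has_bridge n A 0 2) (0, 2) (2, 0)
                    (link_if (has_bridge n A 0 1) (0, 1) (1, 0) (piece_links n A)))"
  unfolding skeleton_def piece_links_def link_if_def has_bridge_def less_3_iff
  by (auto simp: bridge_sym)

lemma piece_labels_represent:
  assumes ts: "\<forall>i<3. profile n (piece n i A) = Some (ts ! i)"
  shows "\<forall>x y. piece_labels ts x = piece_labels ts y \<longleftrightarrow> (x, y) \<in> (piece_links n A)\<^sup>*"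
proof (intro allI iffI)
  fix x y
  assume eq: "piece_labels ts x = piece_labels ts y"
  obtain i c j d where xy: "x = (i, c)" "y = (j, d)" by fastforce
  show "(x, y) \<in> (piece_links n A)\<^sup>*"
  proof (cases "i < 3 \<and> c < 3")
    case True
    then have "j < 3 \<and> d < 3" "i = j" "ts ! i ! c = ts ! i ! d"
      using eq xy by (auto simp: piece_labels_def split: if_splits)
    then have "(x, y) \<in> piece_links n A"
      using profile_label_eq[of n "piece n i A" "ts ! i" c d] ts True xy
      by (auto simp: piece_links_def)
    then show ?thesis by auto
  next
    case False
    then have "x = y" using eq xy by (auto simp: piece_labels_def split: if_splits)
    then show ?thesis by simp
  qed
next
  fix x y
  show "(x, y) \<in> (piece_links n A)\<^sup>* \<Longrightarrow> piece_labels ts x = piece_labels ts y"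
  proof (induction rule: rtrancl_induct)
    case (step y z)
    then obtain i c d where e: "y = (i, c)" "z = (i, d)" "i < 3" "c < 3" "d < 3"
      "same_comp (piece n i A) (corner n c) (corner n d)" unfolding piece_links_def by blast
    then have "ts ! i ! c = ts ! i ! d" using profile_label_eq[of n "piece n i A" "ts ! i" c d] ts by auto
    then show ?case using step(3) e by (simp add: piece_labels_def)
  qed simp
qed

lemma skeleton_labels_represent:
  assumes "\<forall>i<3. profile n (piece n i A) = Some (ts ! i)"
  shows "\<forall>x y. skeleton_labels ts (has_bridge n A 0 1) (has_bridge n A 0 2) (has_bridge n A 1 2) x
            = skeleton_labels ts (has_bridge n A 0 1) (has_bridge n A 0 2) (has_bridge n A 1 2) y
            \<longleftrightarrow> (x, y) \<in> (skeleton n A)\<^sup>*"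
  unfolding skeleton_labels_def skeleton_by_links
  by (intro merge_if_represents piece_labels_represent[OF assms])

definition skeleton_nodes :: "(nat \<times> nat) list" where
  "skeleton_nodes = [(0,0),(0,1),(0,2),(1,0),(1,1),(1,2),(2,0),(2,1),(2,2)]"

lemma all_skeleton_nodes: "(\<forall>x\<in>set skeleton_nodes. P x) \<longleftrightarrow> (\<forall>i<3. \<forall>c<3. P (i, c))"
  by (simp add: skeleton_nodes_def all_less_3)

definition glue :: "nat list list \<Rightarrow> bool \<Rightarrow> bool \<Rightarrow> bool \<Rightarrow> nat list option" where
  "glue ts b01 b02 b12 = (let L = skeleton_labels ts b01 b02 b12 in
     if \<forall>x\<in>set skeleton_nodes. L x = L (0,0) \<or> L x = L (1,1) \<or> L x = L (2,2)
     then Some (partition_code (L (0,0) = L (1,1)) (L (0,0) = L (2,2)) (L (1,1) = L (2,2)))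
     else None)"

definition glue_profiles :: "nat list option \<Rightarrow> nat list option \<Rightarrow> nat list option
                               \<Rightarrow> bool \<Rightarrow> bool \<Rightarrow> bool \<Rightarrow> nat list option" where
  "glue_profiles p0 p1 p2 b01 b02 b12 = (case (p0, p1, p2) of
     (Some t0, Some t1, Some t2) \<Rightarrow> glue [t0, t1, t2] b01 b02 b12 | _ \<Rightarrow> None)"

lemma profile_Suc:
  assumes A: "A \<subseteq> sigmaE (Suc n)"
  shows "profile (Suc n) A = glue_profiles (profile n (piece n 0 A)) (profile n (piece n 1 A))
           (profile n (piece n 2 A)) (has_bridge n A 0 1) (has_bridge n A 0 2) (has_bridge n A 1 2)"
proof (cases "\<forall>i<3. anchored n (piece n i A)")
  case False
  then show ?thesis using anchored_Suc_iff[OF A]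
    by (auto simp: profile_def glue_profiles_def all_less_3)
next
  case True
  define ts where "ts = map (\<lambda>i. the (profile n (piece n i A))) [0, 1, 2]"
  have ts: "\<forall>i<3. profile n (piece n i A) = Some (ts ! i)"
    using True by (simp add: all_less_3 ts_def profile_def)
  define L where "L = skeleton_labels ts (has_bridge n A 0 1) (has_bridge n A 0 2) (has_bridge n A 1 2)"
  have L: "\<forall>x y. L x = L y \<longleftrightarrow> (x, y) \<in> (skeleton n A)\<^sup>*"
    unfolding L_def by (rule skeleton_labels_represent[OF ts])
  have corners: "same_comp A (corner (Suc n) a) (corner (Suc n) b) \<longleftrightarrow> L (a, a) = L (b, b)"
    if "a < 3" "b < 3" for a b
    unfolding corner_Suc using same_comp_corners_iff_skeleton[OF A that(1,1,2,2)] L by simp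
  have anchored: "anchored (Suc n) A \<longleftrightarrow>
      (\<forall>x\<in>set skeleton_nodes. L x = L (0,0) \<or> L x = L (1,1) \<or> L x = L (2,2))"
    unfolding anchored_Suc_iff[OF A] all_skeleton_nodes using True L by (simp add: all_less_3 ex_less_3)
  have "glue_profiles (profile n (piece n 0 A)) (profile n (piece n 1 A)) (profile n (piece n 2 A))
      (has_bridge n A 0 1) (has_bridge n A 0 2) (has_bridge n A 1 2)
      = glue ts (has_bridge n A 0 1) (has_bridge n A 0 2) (has_bridge n A 1 2)"
  proof -
    have "profile n (piece n 0 A) = Some (ts ! 0)" "profile n (piece n 1 A) = Some (ts ! 1)"
      "profile n (piece n 2 A) = Some (ts ! 2)" using ts by (simp_all add: all_less_3)
    moreover have "[ts ! 0, ts ! 1, ts ! 2] = ts" by (simp add: ts_def)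
    ultimately show ?thesis by (simp add: glue_profiles_def)
  qed
  moreover have "profile (Suc n) A = glue ts (has_bridge n A 0 1) (has_bridge n A 0 2) (has_bridge n A 1 2)"
    unfolding glue_def profile_def[of "Suc n"] Let_def L_def[symmetric] anchored
    using corners[of 0 1] corners[of 0 2] corners[of 1 2] by simp
  ultimately show ?thesis by simp
qed

lemma profile_sigmaE: "profile n (sigmaE n) = Some joined"
proof (induction n)
  case 0
  have "anchored 0 (sigmaE 0)" by (auto simp: anchored_def corner_def intro: exI[of _ 0])
  then show ?case by (simp add: profile_def corner_def partition_code_def)
next
  case (Suc n)
  have "piece n i (sigmaE (Suc n)) = sigmaE n" if "i \<in> {0,1,2}" for i
    using that unfolding piece_def sigmaE_Suc by blast
  moreover have "has_bridge n (sigmaE (Suc n)) i j" if "(i, j) \<in> {(0, 1), (0, 2), (1, 2)}" for i j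
    using that by (auto simp: has_bridge_def sigmaE_Suc)
  ultimately have "profile (Suc n) (sigmaE (Suc n)) = glue_profiles (Some joined) (Some joined) (Some joined) True True True"
    using profile_Suc[of "sigmaE (Suc n)" n] Suc by simp
  also have "\<dots> = Some joined"
    by (simp add: glue_profiles_def glue_def skeleton_labels_def merge_if_def merge_def
        piece_labels_def skeleton_nodes_def partition_code_def)
  finally show ?case .
qed

section \<open>Counting subgraphs by profile\<close>

definition profile_count :: "nat \<Rightarrow> nat list option \<Rightarrow> nat" where
  "profile_count n p = card {A. A \<subseteq> sigmaE n \<and> profile n A = p}"

definition glue_count :: "(nat list option \<Rightarrow> nat) \<Rightarrow> nat list option \<Rightarrow> nat" where
  "glue_count c s = (\<Sum>p0\<in>Profiles. \<Sum>p1\<in>Profiles. \<Sum>p2\<in>Profiles. c p0 * (c p1 * (c p2 *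
      (\<Sum>b01\<in>UNIV. \<Sum>b02\<in>UNIV. \<Sum>b12\<in>UNIV. if glue_profiles p0 p1 p2 b01 b02 b12 = s then 1 else 0))))"

lemma profile_assemble:
  assumes "(A0, A1, A2, b01, b02, b12) \<in> Parts n"
  shows "profile (Suc n) (assemble n (A0, A1, A2, b01, b02, b12))
         = glue_profiles (profile n A0) (profile n A1) (profile n A2) b01 b02 b12"
  using profile_Suc[OF assemble_subset[OF assms]] piece_assemble[OF assms] has_bridge_assemble[OF assms]
  by simp

lemma card_subgraphs_Suc:
  "card {A. A \<subseteq> sigmaE (Suc n) \<and> P A} = card {x \<in> Parts n. P (assemble n x)}"
proof -
  have inj: "inj_on (assemble n) (Parts n)" using bij_assemble bij_betw_def by blast
  have "assemble n ` {x \<in> Parts n. P (assemble n x)} = {A. A \<subseteq> sigmaE (Suc n) \<and> P A}"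
  proof
    show "assemble n ` {x \<in> Parts n. P (assemble n x)} \<subseteq> {A. A \<subseteq> sigmaE (Suc n) \<and> P A}"
      by (rule image_subsetI) (simp add: assemble_subset)
    show "{A. A \<subseteq> sigmaE (Suc n) \<and> P A} \<subseteq> assemble n ` {x \<in> Parts n. P (assemble n x)}"
    proof
      fix A assume "A \<in> {A. A \<subseteq> sigmaE (Suc n) \<and> P A}"
      then show "A \<in> assemble n ` {x \<in> Parts n. P (assemble n x)}"
        using assemble_decompose decompose_in_Parts by (metis (mono_tags, lifting) image_eqI mem_Collect_eq)
    qed
  qed
  then show ?thesis
    by (metis (no_types, lifting) inj inj_on_subset mem_Collect_eq subsetI card_image)
qed

lemma finite_Profiles: "finite Profiles"
  by (simp add: Profiles_def Codes_def)

lemma sum_by_profile: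
  "(\<Sum>A\<in>Pow (sigmaE n). g (profile n A)) = (\<Sum>p\<in>Profiles. profile_count n p * g p)"
proof -
  have "(\<Sum>A\<in>Pow (sigmaE n). g (profile n A))
        = (\<Sum>p\<in>Profiles. \<Sum>A\<in>{A \<in> Pow (sigmaE n). profile n A = p}. g (profile n A))"
    by (rule sum.group[symmetric])
       (use profile_in_Profiles in \<open>auto simp: finite_sigmaE finite_Profiles\<close>)
  also have "\<dots> = (\<Sum>p\<in>Profiles. profile_count n p * g p)"
    by (intro sum.cong refl) (simp add: profile_count_def Pow_def)
  finally show ?thesis .
qed

lemma profile_count_Suc: "profile_count (Suc n) s = glue_count (profile_count n) s"
proof -
  let ?P = "Pow (sigmaE n)"
  define g where "g p0 p1 p2 = (\<Sum>b01\<in>(UNIV::bool set). \<Sum>b02\<in>(UNIV::bool set). \<Sum>b12\<in>(UNIV::bool set).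
      if glue_profiles p0 p1 p2 b01 b02 b12 = s then 1 else (0::nat))" for p0 p1 p2
  have "profile_count (Suc n) s = (\<Sum>x\<in>Parts n. if profile (Suc n) (assemble n x) = s then 1 else 0)"
    unfolding profile_count_def card_subgraphs_Suc unfolding card_eq_sum
    by (rule sum.inter_filter) (simp add: Parts_def finite_sigmaE)
  also have "\<dots> = (\<Sum>A0\<in>?P. \<Sum>A1\<in>?P. \<Sum>A2\<in>?P. g (profile n A0) (profile n A1) (profile n A2))"
    unfolding Parts_def sum.cartesian_product g_def
    by (intro sum.cong refl) (auto simp: profile_assemble[unfolded Parts_def])
  also have "\<dots> = (\<Sum>p0\<in>Profiles. profile_count n p0 * (\<Sum>A1\<in>?P. \<Sum>A2\<in>?P. g p0 (profile n A1) (profile n A2)))"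
    by (rule sum_by_profile[of "\<lambda>p0. \<Sum>A1\<in>?P. \<Sum>A2\<in>?P. g p0 (profile n A1) (profile n A2)" n])
  also have "\<dots> = (\<Sum>p0\<in>Profiles. profile_count n p0 * (\<Sum>p1\<in>Profiles. profile_count n p1 *
                    (\<Sum>A2\<in>?P. g p0 p1 (profile n A2))))"
    by (intro sum.cong refl arg_cong[where f = "\<lambda>z. _ * z"] sum_by_profile)
  also have "\<dots> = (\<Sum>p0\<in>Profiles. profile_count n p0 * (\<Sum>p1\<in>Profiles. profile_count n p1 *
                    (\<Sum>p2\<in>Profiles. profile_count n p2 * g p0 p1 p2)))"
    by (intro sum.cong refl arg_cong[where f = "\<lambda>z. _ * z"] sum_by_profile)
  also have "\<dots> = glue_count (profile_count n) s"
    unfolding glue_count_def g_def by (simp add: sum_distrib_left)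
  finally show ?thesis .
qed

text \<open>Rewrites that let the simplifier evaluate \<open>glue_count\<close> on the five codes.\<close>
lemma Profiles_sum: "(\<Sum>p\<in>Profiles. f p) = f None + (\<Sum>t\<in>Codes. f (Some t))"
  by (simp add: Profiles_def sum.reindex Codes_def)

lemma glue_profiles_None:
  "glue_profiles None p1 p2 b01 b02 b12 = None" "glue_profiles p0 None p2 b01 b02 b12 = None"
  "glue_profiles p0 p1 None b01 b02 b12 = None"
  by (simp_all add: glue_profiles_def split: option.splits)

lemma glue_profiles_Some:
  "glue_profiles (Some t0) (Some t1) (Some t2) b01 b02 b12 = glue [t0, t1, t2] b01 b02 b12"
  by (simp add: glue_profiles_def)

lemmas glue_evaluation = Codes_def glue_def skeleton_labels_def merge_if_def merge_def piece_labels_def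
  skeleton_nodes_def partition_code_def UNIV_bool

context
  fixes c :: "nat list option \<Rightarrow> nat" and H N M :: nat
  assumes counts: "c (Some joined) = H" "c (Some top_apart) = N" "c (Some left_apart) = N"
    "c (Some right_apart) = N" "c (Some all_apart) = M"
begin

lemma glue_count_joined: "glue_count c (Some joined) = 4 * H ^ 3 + 6 * H ^ 2 * N"
  unfolding glue_count_def
  by (simp only: Profiles_sum glue_profiles_None glue_profiles_Some option.distinct if_False
        sum.neutral_const mult_0_right add_0 add_0_right,
      simp add: glue_evaluation counts counts[unfolded One_nat_def],
      simp add: algebra_simps power3_eq_cube power2_eq_square)

lemma glue_count_top_apart:
  "glue_count c (Some top_apart) = H ^ 3 + 8 * H ^ 2 * N + H ^ 2 * M + 7 * H * N ^ 2"
  unfolding glue_count_def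
  by (simp only: Profiles_sum glue_profiles_None glue_profiles_Some option.distinct if_False
        sum.neutral_const mult_0_right add_0 add_0_right,
      simp add: glue_evaluation counts counts[unfolded One_nat_def],
      simp add: algebra_simps power3_eq_cube power2_eq_square)

lemma glue_count_all_apart:
  "glue_count c (Some all_apart)
   = H ^ 3 + 12 * H ^ 2 * N + 3 * H ^ 2 * M + 39 * H * N ^ 2 + 12 * H * N * M + 14 * N ^ 3"
  unfolding glue_count_def
  by (simp only: Profiles_sum glue_profiles_None glue_profiles_Some option.distinct if_False
        sum.neutral_const mult_0_right add_0 add_0_right,
      simp add: glue_evaluation counts counts[unfolded One_nat_def],
      simp add: algebra_simps power3_eq_cube power2_eq_square)

end

section \<open>Rotation symmetry\<close>

definition rotate_digit :: "nat \<Rightarrow> nat" where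
  "rotate_digit c = (if c = 0 then 1 else if c = 1 then 2 else if c = 2 then 0 else c)"

definition rotate_subgraph :: "nat list set set \<Rightarrow> nat list set set" where
  "rotate_subgraph A = image (map rotate_digit) ` A"

lemma rotate_digit_cube: "rotate_digit (rotate_digit (rotate_digit c)) = c"
  by (simp add: rotate_digit_def)

lemma rotate_digit_cube_id: "rotate_digit \<circ> rotate_digit \<circ> rotate_digit = id"
  by (rule ext) (simp add: rotate_digit_cube)

lemma rotate_corner: "map rotate_digit (corner n c) = corner n (rotate_digit c)"
  by (simp add: corner_def)

lemma image_map_Cons: "map f ` (Cons i ` X) = Cons (f i) ` (map f ` X)"
  by (simp add: image_image)

lemma rotate_sigmaV: "map rotate_digit ` sigmaV n = sigmaV n"
proof (induction n)
  case (Suc n)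
  then show ?case
    unfolding sigmaV_Suc by (auto simp: image_Un image_map_Cons rotate_digit_def)
qed simp

lemma rotate_sigmaE: "rotate_subgraph (sigmaE n) = sigmaE n"
proof (induction n)
  case (Suc n)
  have "image (map rotate_digit) ` (image (Cons i) ` X)
        = image (Cons (rotate_digit i)) ` (image (map rotate_digit) ` X)" for i X
    by (simp add: image_image image_map_Cons)
  moreover have "image (map rotate_digit) (bridge n i j) = bridge n (rotate_digit i) (rotate_digit j)" for i j
    by (simp add: bridge_def rotate_corner)
  ultimately show ?case using Suc unfolding rotate_subgraph_def sigmaE_Suc
    by (auto simp: image_Un rotate_digit_def bridge_sym)
qed (simp add: rotate_subgraph_def)

lemma rotate_subset: "A \<subseteq> sigmaE n \<Longrightarrow> rotate_subgraph A \<subseteq> sigmaE n"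
  using rotate_sigmaE[of n] unfolding rotate_subgraph_def by blast

lemma inj_rotate: "inj rotate_subgraph"
proof (rule injI)
  have undo: "image (map (rotate_digit \<circ> rotate_digit)) ` rotate_subgraph A = A" for A
    by (simp add: rotate_subgraph_def image_image map_map rotate_digit_cube_id)
  fix A B assume "rotate_subgraph A = rotate_subgraph B"
  then show "A = B" using undo by metis
qed

lemma same_comp_rotate_iff:
  "same_comp (rotate_subgraph A) (map rotate_digit u) (map rotate_digit v) \<longleftrightarrow> same_comp A u v"
proof
  assume "same_comp (rotate_subgraph A) (map rotate_digit u) (map rotate_digit v)"
  from same_comp_image[OF this, of "map (rotate_digit \<circ> rotate_digit)"] show "same_comp A u v"
    by (simp add: rotate_subgraph_def image_image map_map rotate_digit_cube_id)
qed (simp add: rotate_subgraph_def same_comp_image)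

lemma anchored_rotate: "anchored n A \<Longrightarrow> anchored n (rotate_subgraph A)"
  unfolding anchored_def
proof
  fix v assume anc: "\<forall>v\<in>sigmaV n. \<exists>c<3. same_comp A (corner n c) v" and "v \<in> sigmaV n"
  then obtain u where u: "u \<in> sigmaV n" "v = map rotate_digit u" using rotate_sigmaV by blast
  then obtain c where c: "c < 3" "same_comp A (corner n c) u" using anc by blast
  then have "same_comp (rotate_subgraph A) (map rotate_digit (corner n c)) v"
    using same_comp_rotate_iff u(2) by blast
  moreover have "rotate_digit c < 3" using c(1) by (simp add: rotate_digit_def)
  ultimately show "\<exists>c<3. same_comp (rotate_subgraph A) (corner n c) v"
    unfolding rotate_corner by blast
qed

definition rotate_code :: "nat list \<Rightarrow> nat list" where
  "rotate_code t = partition_code (t ! 2 = t ! 0) (t ! 2 = t ! 1) (t ! 0 = t ! 1)"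

lemma profile_rotate:
  assumes "profile n A = Some t"
  shows "profile n (rotate_subgraph A) = Some (rotate_code t)"
proof -
  have sc: "same_comp (rotate_subgraph A) (corner n (rotate_digit a)) (corner n (rotate_digit b))
            \<longleftrightarrow> t ! a = t ! b" if "a < 3" "b < 3" for a b
    using same_comp_rotate_iff[of A "corner n a" "corner n b"] profile_label_eq[OF assms that]
    by (simp add: rotate_corner)
  have "anchored n (rotate_subgraph A)" using assms anchored_rotate by (simp add: profile_Some_iff)
  then show ?thesis
    using sc[of 2 0] sc[of 2 1] sc[of 0 1] by (simp add: profile_def rotate_code_def rotate_digit_def)
qed

lemma profile_count_le_rotate: "profile_count n (Some t) \<le> profile_count n (Some (rotate_code t))"
  unfolding profile_count_def
proof (rule card_inj_on_le)
  show "inj_on rotate_subgraph {A. A \<subseteq> sigmaE n \<and> profile n A = Some t}"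
    using inj_rotate by (simp add: inj_on_def inj_def)
  show "rotate_subgraph ` {A. A \<subseteq> sigmaE n \<and> profile n A = Some t}
        \<subseteq> {A. A \<subseteq> sigmaE n \<and> profile n A = Some (rotate_code t)}"
    using profile_rotate rotate_subset by blast
qed (simp add: finite_sigmaE)

text \<open>Rotation permutes the three profiles with one outmost vertex apart cyclically.\<close>
lemma profile_count_one_apart:
  "profile_count n (Some left_apart) = profile_count n (Some top_apart)"
  "profile_count n (Some right_apart) = profile_count n (Some top_apart)"
  using profile_count_le_rotate[of n top_apart] profile_count_le_rotate[of n left_apart]
    profile_count_le_rotate[of n right_apart]
  by (simp_all add: rotate_code_def partition_code_def)

section \<open>The weights at x = 1, y = 2\<close>

lemma ncomp_ge_1: "1 \<le> ncomp (sigmaV n) A"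
  using ncomp_bounds_by_representatives(1)[OF finite_sigmaV, of "{corner n 0}" n A]
  by (simp add: corner_in_sigmaV)

lemma ncomp_le_iff_anchored:
  assumes Os: "Os \<subseteq> corner n ` {0, 1, 2}"
    and apart: "\<forall>p\<in>Os. \<forall>q\<in>Os. same_comp A p q \<longrightarrow> p = q"
    and meets: "\<forall>c<3. \<exists>p\<in>Os. same_comp A p (corner n c)"
  shows "ncomp (sigmaV n) A \<le> card Os \<longleftrightarrow> anchored n A"
proof -
  have "Os \<subseteq> sigmaV n" using Os corner_in_sigmaV by auto
  then have "ncomp (sigmaV n) A \<le> card Os \<longleftrightarrow> (\<forall>v\<in>sigmaV n. \<exists>p\<in>Os. same_comp A p v)"
    by (rule ncomp_bounds_by_representatives(2)[OF finite_sigmaV _ apart])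
  also have "\<dots> \<longleftrightarrow> anchored n A"
    unfolding anchored_def
  proof (intro iffI ballI)
    fix v assume "\<forall>v\<in>sigmaV n. \<exists>p\<in>Os. same_comp A p v" "v \<in> sigmaV n"
    then obtain p where p: "p \<in> Os" "same_comp A p v" by blast
    then obtain c where "c \<in> {0, 1, 2}" "p = corner n c" using Os by blast
    then have "c < 3" "same_comp A (corner n c) v" using p by auto
    then show "\<exists>c<3. same_comp A (corner n c) v" by blast
  next
    fix v assume "\<forall>v\<in>sigmaV n. \<exists>c<3. same_comp A (corner n c) v" "v \<in> sigmaV n"
    then obtain c where c: "c < 3" "same_comp A (corner n c) v" by blast
    then obtain p where "p \<in> Os" "same_comp A p (corner n c)" using meets by blast
    then show "\<exists>p\<in>Os. same_comp A p v" using same_comp_trans[OF _ c(2)] by blast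
  qed
  finally show ?thesis .
qed

lemma profile_joined_iff:
  "profile n A = Some joined \<longleftrightarrow> anchored n A \<and> same_comp A (corner n 0) (corner n 1)
     \<and> same_comp A (corner n 0) (corner n 2)"
  by (auto simp: profile_Some_iff partition_code_def)

lemma ncomp_eq_1_iff: "ncomp (sigmaV n) A = 1 \<longleftrightarrow> profile n A = Some joined"
proof -
  have "ncomp (sigmaV n) A = 1 \<longleftrightarrow> (\<forall>v\<in>sigmaV n. same_comp A (corner n 0) v)"
    using ncomp_bounds_by_representatives(2)[OF finite_sigmaV, of "{corner n 0}" n A]
      ncomp_ge_1[of n A] corner_in_sigmaV[of 0 n] by auto
  also have "\<dots> \<longleftrightarrow> profile n A = Some joined"
    unfolding profile_joined_iff
  proof (intro iffI conjI)
    assume top: "\<forall>v\<in>sigmaV n. same_comp A (corner n 0) v"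
    then show "anchored n A" unfolding anchored_def by (auto intro: exI[of _ 0])
    show "same_comp A (corner n 0) (corner n 1)" "same_comp A (corner n 0) (corner n 2)"
      using top corner_in_sigmaV by auto
  next
    assume h: "anchored n A \<and> same_comp A (corner n 0) (corner n 1) \<and> same_comp A (corner n 0) (corner n 2)"
    show "\<forall>v\<in>sigmaV n. same_comp A (corner n 0) v"
    proof
      fix v assume "v \<in> sigmaV n"
      then obtain c where c: "c < 3" "same_comp A (corner n c) v" using h by (auto simp: anchored_def)
      then have "same_comp A (corner n 0) (corner n c)" using h by (auto simp: less_3_iff)
      then show "same_comp A (corner n 0) v" using c(2) by (rule same_comp_trans)
    qed
  qed
  finally show ?thesis .
qed

lemma ncomp_sigmaE: "ncomp (sigmaV n) (sigmaE n) = 1"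
  using ncomp_eq_1_iff profile_sigmaE by blast

text \<open>Profiles with the outmost vertices not all joined, in terms of the numbers of
  components: \<open>N\<close> and \<open>M\<close> count exactly these subgraphs.\<close>
lemma profile_top_apart_iff:
  "profile n A = Some top_apart \<longleftrightarrow> same_comp A (corner n 1) (corner n 2)
     \<and> \<not> same_comp A (corner n 0) (corner n 1) \<and> ncomp (sigmaV n) A \<le> 2"
proof (cases "same_comp A (corner n 1) (corner n 2) \<and> \<not> same_comp A (corner n 0) (corner n 1)")
  case True
  then have "\<not> same_comp A (corner n 0) (corner n 2)"
    using same_comp_trans[of A "corner n 0" "corner n 2" "corner n 1"]
      same_comp_sym[of A "corner n 1" "corner n 2"] by blast
  moreover have "card {corner n 0, corner n 1} = 2" using True by (cases "corner n 0 = corner n 1") auto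
  moreover have "ncomp (sigmaV n) A \<le> card {corner n 0, corner n 1} \<longleftrightarrow> anchored n A"
    by (rule ncomp_le_iff_anchored)
       (use True same_comp_sym[of A "corner n 1" "corner n 0"] in \<open>auto simp: all_less_3\<close>)
  ultimately show ?thesis using True by (simp add: profile_def partition_code_def)
next
  case False
  then show ?thesis by (auto simp: profile_Some_iff partition_code_def)
qed

lemma profile_all_apart_iff:
  "profile n A = Some all_apart \<longleftrightarrow> \<not> same_comp A (corner n 1) (corner n 2)
     \<and> \<not> same_comp A (corner n 0) (corner n 1) \<and> \<not> same_comp A (corner n 0) (corner n 2)
     \<and> ncomp (sigmaV n) A \<le> 3"
proof (cases "\<not> same_comp A (corner n 1) (corner n 2) \<and> \<not> same_comp A (corner n 0) (corner n 1)
              \<and> \<not> same_comp A (corner n 0) (corner n 2)")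
  case True
  then have "card {corner n 0, corner n 1, corner n 2} = 3"
    by (cases "corner n 0 = corner n 1"; cases "corner n 0 = corner n 2"; cases "corner n 1 = corner n 2")
       auto
  moreover have "ncomp (sigmaV n) A \<le> card {corner n 0, corner n 1, corner n 2} \<longleftrightarrow> anchored n A"
    by (rule ncomp_le_iff_anchored)
       (use True same_comp_sym[of A "corner n 1" "corner n 0"] same_comp_sym[of A "corner n 2" "corner n 0"]
          same_comp_sym[of A "corner n 2" "corner n 1"] in \<open>auto simp: all_less_3\<close>)
  ultimately show ?thesis using True by (simp add: profile_def partition_code_def)
next
  case False
  then show ?thesis by (auto simp: profile_Some_iff partition_code_def)
qed

lemma rank_deficiency: "rk (sigmaV n) (sigmaE n) - rk (sigmaV n) A = ncomp (sigmaV n) A - 1"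
  using ncomp_sigmaE ncomp_le_card[OF finite_sigmaV, of n A] ncomp_ge_1[of n A]
  unfolding rk_def by simp

lemma sum_weights_at_1_2:
  "finite S \<Longrightarrow> (\<Sum>A\<in>S. (1 - 1 :: real) ^ f A * (2 - 1) ^ g A) = real (card {A \<in> S. f A = 0})"
  by (simp add: power_0_left sum.inter_filter[symmetric])

lemma Hn_at_1_2: "Hn n 1 2 = real (card {A. A \<subseteq> sigmaE n \<and> ncomp (sigmaV n) A = 1})"
proof -
  have "Hn n 1 2 = real (card {A \<in> Pow (sigmaE n). ncomp (sigmaV n) A - 1 = 0})"
    unfolding Hn_def tutte_def rank_deficiency by (rule sum_weights_at_1_2) (simp add: finite_sigmaE)
  also have "{A \<in> Pow (sigmaE n). ncomp (sigmaV n) A - 1 = 0} = {A. A \<subseteq> sigmaE n \<and> ncomp (sigmaV n) A = 1}"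
    using ncomp_ge_1[of n] by (auto simp: le_antisym)
  finally show ?thesis .
qed

lemma H2_at_1_2: "H2 n 1 2 = real (profile_count n (Some joined))"
proof -
  let ?S = "{A. A \<subseteq> sigmaE n \<and> same_comp A (corner n 0) (corner n 1) \<and> same_comp A (corner n 0) (corner n 2)}"
  have "H2 n 1 2 = real (card {A \<in> ?S. ncomp (sigmaV n) A - 1 = 0})"
    unfolding H2_def weight_def rank_deficiency outmost_corners
    by (rule sum_weights_at_1_2) (simp add: finite_sigmaE)
  also have "{A \<in> ?S. ncomp (sigmaV n) A - 1 = 0} = {A. A \<subseteq> sigmaE n \<and> profile n A = Some joined}"
  proof -
    have "ncomp (sigmaV n) A - 1 = 0 \<longleftrightarrow> profile n A = Some joined" for A
      unfolding ncomp_eq_1_iff[symmetric] using ncomp_ge_1[of n A] by arith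
    then show ?thesis by (auto simp: profile_joined_iff)
  qed
  finally show ?thesis unfolding profile_count_def .
qed

lemma Nn_at_1_2: "Nn n 1 2 = real (profile_count n (Some top_apart))"
proof -
  let ?S = "{A. A \<subseteq> sigmaE n \<and> same_comp A (corner n 1) (corner n 2) \<and> \<not> same_comp A (corner n 0) (corner n 1)}"
  have "Nn n 1 2 = real (card {A \<in> ?S. ncomp (sigmaV n) A - 1 - 1 = 0})"
    unfolding Nn_def rank_deficiency outmost_corners
    by (rule sum_weights_at_1_2) (simp add: finite_sigmaE)
  also have "{A \<in> ?S. ncomp (sigmaV n) A - 1 - 1 = 0} = {A. A \<subseteq> sigmaE n \<and> profile n A = Some top_apart}"
    unfolding profile_top_apart_iff by auto
  finally show ?thesis unfolding profile_count_def .
qed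

lemma Mn_at_1_2: "Mn n 1 2 = real (profile_count n (Some all_apart))"
proof -
  let ?S = "{A. A \<subseteq> sigmaE n \<and> \<not> same_comp A (corner n 1) (corner n 2)
                 \<and> \<not> same_comp A (corner n 0) (corner n 1) \<and> \<not> same_comp A (corner n 0) (corner n 2)}"
  have "Mn n 1 2 = real (card {A \<in> ?S. ncomp (sigmaV n) A - 1 - 2 = 0})"
    unfolding Mn_def rank_deficiency outmost_corners
    by (rule sum_weights_at_1_2) (simp add: finite_sigmaE)
  also have "{A \<in> ?S. ncomp (sigmaV n) A - 1 - 2 = 0} = {A. A \<subseteq> sigmaE n \<and> profile n A = Some all_apart}"
    unfolding profile_all_apart_iff by auto
  finally show ?thesis unfolding profile_count_def .
qed

lemma profile_counts_Suc:
  fixes n :: nat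
  defines "H \<equiv> profile_count n (Some joined)" and "N \<equiv> profile_count n (Some top_apart)"
    and "M \<equiv> profile_count n (Some all_apart)"
  shows "profile_count (Suc n) (Some joined) = 4 * H ^ 3 + 6 * H ^ 2 * N"
    and "profile_count (Suc n) (Some top_apart) = H ^ 3 + 8 * H ^ 2 * N + H ^ 2 * M + 7 * H * N ^ 2"
    and "profile_count (Suc n) (Some all_apart)
         = H ^ 3 + 12 * H ^ 2 * N + 3 * H ^ 2 * M + 39 * H * N ^ 2 + 12 * H * N * M + 14 * N ^ 3"
  unfolding profile_count_Suc H_def N_def M_def
  by (rule glue_count_joined[of "profile_count n", OF refl refl profile_count_one_apart refl]
        glue_count_top_apart[of "profile_count n", OF refl refl profile_count_one_apart refl]
        glue_count_all_apart[of "profile_count n", OF refl refl profile_count_one_apart refl])+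

lemma profile_count_0: "profile_count 0 p = (if p = Some joined then 1 else 0)"
proof -
  have "{A. A \<subseteq> sigmaE 0 \<and> profile 0 A = p} = (if p = Some joined then {{}} else {})"
    using profile_sigmaE[of 0] by auto
  then show ?thesis unfolding profile_count_def by simp
qed

lemma profile_counts_1:
  "profile_count 1 (Some joined) = 4" "profile_count 1 (Some top_apart) = 1"
  "profile_count 1 (Some all_apart) = 1"
  using profile_counts_Suc[of 0] by (simp_all add: profile_count_0)

theorem proposition4p8:
  shows "(\<forall>n\<ge>1. real (card {A. A \<subseteq> sigmaE n \<and> ncomp (sigmaV n) A = 1}) = Hn n 1 2
              \<and> Hn n 1 2 = H2 n 1 2)
    \<and> (\<forall>n\<ge>1.
         H2 (Suc n) 1 2 = 4 * H2 n 1 2 ^ 3 + 6 * H2 n 1 2 ^ 2 * Nn n 1 2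
       \<and> Nn (Suc n) 1 2 = H2 n 1 2 ^ 3 + 8 * H2 n 1 2 ^ 2 * Nn n 1 2
             + H2 n 1 2 ^ 2 * Mn n 1 2 + 7 * H2 n 1 2 * Nn n 1 2 ^ 2
       \<and> Mn (Suc n) 1 2 = H2 n 1 2 ^ 3 + 12 * H2 n 1 2 ^ 2 * Nn n 1 2
             + 3 * H2 n 1 2 ^ 2 * Mn n 1 2 + 39 * H2 n 1 2 * Nn n 1 2 ^ 2
             + 12 * H2 n 1 2 * Nn n 1 2 * Mn n 1 2 + 14 * Nn n 1 2 ^ 3)
    \<and> H2 1 1 2 = 4 \<and> Nn 1 1 2 = 1 \<and> Mn 1 1 2 = 1"
proof -
  have connected: "card {A. A \<subseteq> sigmaE n \<and> ncomp (sigmaV n) A = 1} = profile_count n (Some joined)" for n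
    unfolding profile_count_def ncomp_eq_1_iff ..
  show ?thesis
    unfolding Hn_at_1_2 H2_at_1_2 Nn_at_1_2 Mn_at_1_2 connected profile_counts_Suc profile_counts_1
    by simp
qed

end
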